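(* Every $\mathrm{LTL}(\sim)$-formula $\varphi$ that does not contain the operator $\mathsf X$ is stutter-invariant: for all teams $T,T'$ with $T\equiv_{\mathrm{st}}T'$ we have $T\models\varphi\iff T'\models\varphi$.
   Context: Let $\mathrm{AP}$ be a countably infinite set of atomic propositions. A trace is an infinite sequence $t=t(0)t(1)\cdots\in(\wp\mathrm{AP})^\omega$, and $t^i=t(i)t(i+1)\cdots$. A team is a (possibly empty) set $T$ of traces, and $T^i=\{t^i: t\in T\}$. Formulas of $\mathrm{LTL}(\sim)$ are given by $\varphi::=p\mid\neg\varphi\mid\varphi\wedge\varphi\mid\varphi\vee\varphi\mid\mathsf X\varphi\mid\mathsf F\varphi\mid\mathsf G\varphi\mid\varphi\,\mathsf U\,\varphi\mid\varphi\,\mathsf R\,\varphi\mid{\sim}\varphi$ with $p\in\mathrm{AP}$. Synchronous team semantics: $T\models p$ iff $p\in t(0)$ for all $t\in T$; $T\models\neg\varphi$ iff $\{t\}\not\models\varphi$ for all $t\in T$; $T\models\varphi\wedge\psi$ iff $T\models\varphi$ and $T\models\psi$; $T\models\varphi\vee\psi$ iff $T=S\cup U$ for some $S,U$ with $S\models\varphi$ and $U\models\psi$; $T\models\mathsf X\varphi$ iff $T^1\models\varphi$; $T\models\mathsf F\varphi$ iff $T^k\models\varphi$ for some $k\ge0$; $T\models\mathsf G\varphi$ iff $T^k\models\varphi$ for all $k\ge0$; $T\models\varphi\,\mathsf U\,\psi$ iff there is $k\ge0$ with $T^k\models\psi$ and $T^j\models\varphi$ for all $j<k$; $T\models\varphi\,\mathsf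 R\,\psi$ iff for all $k\ge0$, $T^k\models\psi$ or $T^j\models\varphi$ for some $j<k$; $T\models{\sim}\varphi$ iff $T\not\models\varphi$. A stuttering function of a trace $t$ is a strictly increasing function $f:\mathbb N\to\mathbb N$ with $f(0)=0$ such that $t(f(k))=t(f(k)+1)=\cdots=t(f(k+1)-1)$ for all $k\ge0$. A stuttering function of a team $T$ is a function that is a stuttering function of every $t\in T$. For $f:\mathbb N\to\mathbb N$, $t[f]:=t(f(0))t(f(1))t(f(2))\cdots$ and $T[f]:=\{t[f]:t\in T\}$. Teams $T,T'$ are stutter-equivalent ($T\equiv_{\mathrm{st}}T'$) if there are a stuttering function $f$ of $T$ and a stuttering function $f'$ of $T'$ with $T[f]=T'[f']$. *)

theory Defs
  imports "HOL-Library.Countable_Set"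
begin

type_synonym 'a trace = "nat \<Rightarrow> 'a set"
type_synonym 'a team = "'a trace set"

datatype 'a ltl =
    Prop 'a
  | Neg "'a ltl"
  | Conj "'a ltl" "'a ltl"
  | Disj "'a ltl" "'a ltl"
  | Next "'a ltl"
  | Fut "'a ltl"
  | Glob "'a ltl"
  | Until "'a ltl" "'a ltl"
  | Release "'a ltl" "'a ltl"
  | Tilde "'a ltl"

definition suffix :: "nat \<Rightarrow> 'a trace \<Rightarrow> 'a trace" where
  "suffix i t = (\<lambda>n. t (i + n))"

definition team_suffix :: "nat \<Rightarrow> 'a team \<Rightarrow> 'a team" where
  "team_suffix i T = suffix i ` T"

primrec tsat :: "'a team \<Rightarrow> 'a ltl \<Rightarrow> bool" where
  "tsat T (Prop p) = (\<forall>t\<in>T. p \<in> t 0)"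
| "tsat T (Neg \<phi>) = (\<forall>t\<in>T. \<not> tsat {t} \<phi>)"
| "tsat T (Conj \<phi> \<psi>) = (tsat T \<phi> \<and> tsat T \<psi>)"
| "tsat T (Disj \<phi> \<psi>) = (\<exists>S U. T = S \<union> U \<and> tsat S \<phi> \<and> tsat U \<psi>)"
| "tsat T (Next \<phi>) = tsat (team_suffix 1 T) \<phi>"
| "tsat T (Fut \<phi>) = (\<exists>k. tsat (team_suffix k T) \<phi>)"
| "tsat T (Glob \<phi>) = (\<forall>k. tsat (team_suffix k T) \<phi>)"
| "tsat T (Until \<phi> \<psi>) =
     (\<exists>k. tsat (team_suffix k T) \<psi> \<and> (\<forall>j<k. tsat (team_suffix j T) \<phi>))"
| "tsat T (Release \<phi> \<psi>) =
     (\<forall>k. tsat (team_suffix k T) \<psi> \<or> (\<exists>j<k. tsat (team_suffix j T) \<phi>))"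
| "tsat T (Tilde \<phi>) = (\<not> tsat T \<phi>)"

primrec noX :: "'a ltl \<Rightarrow> bool" where
  "noX (Prop p) = True"
| "noX (Neg \<phi>) = noX \<phi>"
| "noX (Conj \<phi> \<psi>) = (noX \<phi> \<and> noX \<psi>)"
| "noX (Disj \<phi> \<psi>) = (noX \<phi> \<and> noX \<psi>)"
| "noX (Next \<phi>) = False"
| "noX (Fut \<phi>) = noX \<phi>"
| "noX (Glob \<phi>) = noX \<phi>"
| "noX (Until \<phi> \<psi>) = (noX \<phi> \<and> noX \<psi>)"
| "noX (Release \<phi> \<psi>) = (noX \<phi> \<and> noX \<psi>)"
| "noX (Tilde \<phi>) = noX \<phi>"

definition stuttering_fun :: "(nat \<Rightarrow> nat) \<Rightarrow> 'a trace \<Rightarrow> bool" where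
  "stuttering_fun f t \<longleftrightarrow> strict_mono f \<and> f 0 = 0 \<and>
     (\<forall>k i. f k \<le> i \<and> i < f (Suc k) \<longrightarrow> t i = t (f k))"

definition team_stuttering_fun :: "(nat \<Rightarrow> nat) \<Rightarrow> 'a team \<Rightarrow> bool" where
  "team_stuttering_fun f T \<longleftrightarrow> strict_mono f \<and> f 0 = 0 \<and> (\<forall>t\<in>T. stuttering_fun f t)"

definition team_comp :: "'a team \<Rightarrow> (nat \<Rightarrow> nat) \<Rightarrow> 'a team" where
  "team_comp T f = (\<lambda>t. t \<circ> f) ` T"

definition stutter_equiv :: "'a team \<Rightarrow> 'a team \<Rightarrow> bool" where
  "stutter_equiv T T' \<longleftrightarrow> (\<exists>f f'. team_stuttering_fun f T \<and> team_stuttering_fun f' T' \<and>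
     team_comp T f = team_comp T' f')"

end

theory Submission
  imports Defs
begin

text \<open>A stuttering function f of T cuts every trace of T into blocks [f k, f (k+1)) on which it is
constant, and T[f] keeps one position per block. The suffix of T at a position m of block k is
again stuttering, with the suffix of T[f] at k as its compression. So, by induction on the formula,
an X-free formula has the same truth value on T^m and on T[f]^k; the operators F, G, U and R, which
range over all positions, therefore cannot tell T from T[f]. (X can: T^1 may lie in the first block
of T.) Stutter-equivalent teams have a common compression.\<close>

lemma strict_mono_block:
  fixes f :: "nat \<Rightarrow> nat"
  assumes "strict_mono f" and "f 0 = 0"
  obtains k where "f k \<le> m" and "m < f (Suc k)"
proof -
  have "\<exists>k. m < f k"
    using strict_mono_imp_increasing[OF assms(1), of "Suc m"] by (metis Suc_le_lessD)
  then obtain k where k: "m < f k" and before: "\<And>j. j < k \<Longrightarrow> f j \<le> m"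
    unfolding exists_least_iff[of "\<lambda>k. m < f k"] using not_less by blast
  have "k \<noteq> 0"
    using k assms(2) by (metis not_less_zero)
  then obtain j where "k = Suc j"
    using not0_implies_Suc by blast
  then show thesis
    using that[of j] before[of j] k by simp
qed

lemma until_transfer_blocks:
  fixes f :: "nat \<Rightarrow> nat"
  assumes mono: "strict_mono f" and "f 0 = 0"
    and blocks: "\<And>k m. f k \<le> m \<Longrightarrow> m < f (Suc k) \<Longrightarrow> P m = P' k \<and> Q m = Q' k"
  shows "(\<exists>m. Q m \<and> (\<forall>i<m. P i)) \<longleftrightarrow> (\<exists>k. Q' k \<and> (\<forall>j<k. P' j))"
proof -
  have at_f: "P (f k) = P' k \<and> Q (f k) = Q' k" for k
    using blocks[of k "f k"] mono by (simp add: strict_mono_less)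
  have earlier_block: "j < k" if "f j \<le> i" "i < f k" for i j k
    using that mono by (meson le_less_trans not_less strict_mono_less_eq)
  show ?thesis
  proof
    assume "\<exists>m. Q m \<and> (\<forall>i<m. P i)"
    then obtain m where m: "Q m" "\<forall>i<m. P i" by blast
    obtain k where k: "f k \<le> m" "m < f (Suc k)"
      using strict_mono_block[OF assms(1,2)] by blast
    have "P' j" if "j < k" for j
    proof -
      have "f j < m" using k(1) strict_mono_less[OF mono] that by (meson less_le_trans)
      then show "P' j" using m(2) at_f[of j] by simp
    qed
    then show "\<exists>k. Q' k \<and> (\<forall>j<k. P' j)"
      using blocks[OF k] m(1) by blast
  next
    assume "\<exists>k. Q' k \<and> (\<forall>j<k. P' j)"
    then obtain k where k: "Q' k" "\<forall>j<k. P' j" by blast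
    have "P i" if "i < f k" for i
    proof -
      obtain j where j: "f j \<le> i" "i < f (Suc j)"
        using strict_mono_block[OF assms(1,2)] by blast
      then have "j < k" using earlier_block that by blast
      then show "P i" using blocks[OF j] k(2) by simp
    qed
    then show "\<exists>m. Q m \<and> (\<forall>i<m. P i)"
      using at_f[of k] k(1) by blast
  qed
qed

lemma team_stuttering_fun_subset:
  "team_stuttering_fun f T \<Longrightarrow> S \<subseteq> T \<Longrightarrow> team_stuttering_fun f S"
  unfolding team_stuttering_fun_def by auto

lemma team_stuttering_fun_block_const:
  assumes "team_stuttering_fun f T" "t \<in> T" "f k \<le> i" "i < f (Suc k)"
  shows "t i = t (f k)"
  using assms unfolding team_stuttering_fun_def stuttering_fun_def by blast

text \<open>The stuttering function of the suffix at position m, where f k \<le> m < f (k+1): its first block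
is the rest [m, f (k+1)) of block k, the later blocks are those of f.\<close>

definition shift_stuttering :: "(nat \<Rightarrow> nat) \<Rightarrow> nat \<Rightarrow> nat \<Rightarrow> nat \<Rightarrow> nat" where
  "shift_stuttering f k m n = (if n = 0 then 0 else f (k + n) - m)"

lemma shift_stuttering_Suc:
  assumes "strict_mono f" "m < f (Suc k)"
  shows "m + shift_stuttering f k m (Suc n) = f (k + Suc n)" and "m < f (k + Suc n)"
proof -
  have "f (Suc k) \<le> f (k + Suc n)"
    using assms(1) by (simp add: strict_mono_less_eq)
  with assms(2) show "m < f (k + Suc n)" by simp
  then show "m + shift_stuttering f k m (Suc n) = f (k + Suc n)"
    by (simp add: shift_stuttering_def)
qed

lemma strict_mono_shift_stuttering:
  assumes "strict_mono f" "m < f (Suc k)"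
  shows "strict_mono (shift_stuttering f k m)"
  unfolding strict_mono_Suc_iff
proof
  fix n
  show "shift_stuttering f k m n < shift_stuttering f k m (Suc n)"
  proof (cases n)
    case 0
    then show ?thesis using shift_stuttering_Suc[OF assms, of 0] by (simp add: shift_stuttering_def)
  next
    case (Suc n')
    have "f (k + n) < f (k + Suc n)" using assms(1) by (simp add: strict_mono_less)
    then show ?thesis
      using Suc shift_stuttering_Suc[OF assms, of n'] shift_stuttering_Suc[OF assms, of n] by simp
  qed
qed

lemma team_stuttering_fun_suffix:
  assumes st: "team_stuttering_fun f T" and m: "f k \<le> m" "m < f (Suc k)"
  defines "g \<equiv> shift_stuttering f k m"
  shows "team_stuttering_fun g (team_suffix m T)"
    and "team_comp (team_suffix m T) g = team_suffix k (team_comp T f)"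
proof -
  have sm: "strict_mono f" using st unfolding team_stuttering_fun_def by blast
  have shifted: "m + g (Suc n) = f (k + Suc n)" for n
    using shift_stuttering_Suc(1)[OF sm m(2)] by (simp add: g_def)
  have const: "t (m + i) = t (m + g j)" if "t \<in> T" "g j \<le> i" "i < g (Suc j)" for t i j
  proof (cases j)
    case 0
    then have "t (m + i) = t (f k)" and "t m = t (f k)"
      using team_stuttering_fun_block_const[OF st \<open>t \<in> T\<close>] m that(3) shifted[of 0] by simp_all
    then show ?thesis using 0 by (simp add: g_def shift_stuttering_def)
  next
    case (Suc j')
    then have "t (m + i) = t (f (k + j))"
      using team_stuttering_fun_block_const[OF st \<open>t \<in> T\<close>, of "k + j" "m + i"]
        that(2,3) shifted[of j'] shifted[of j] by simp
    then show ?thesis using Suc shifted[of j'] by simp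
  qed
  show "team_stuttering_fun g (team_suffix m T)"
    using strict_mono_shift_stuttering[OF sm m(2)] const
    unfolding team_stuttering_fun_def stuttering_fun_def team_suffix_def suffix_def g_def
    by (auto simp: shift_stuttering_def)
  have "suffix m t \<circ> g = suffix k (t \<circ> f)" if "t \<in> T" for t
  proof
    fix n
    show "(suffix m t \<circ> g) n = suffix k (t \<circ> f) n"
      using team_stuttering_fun_block_const[OF st that m] shifted[of "n - 1"]
      by (cases n) (simp_all add: g_def shift_stuttering_def suffix_def)
  qed
  then show "team_comp (team_suffix m T) g = team_suffix k (team_comp T f)"
    unfolding team_comp_def team_suffix_def image_image by (auto simp: image_iff)
qed

lemma team_comp_Un: "team_comp (S \<union> U) f = team_comp S f \<union> team_comp U f"
  unfolding team_comp_def by auto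

lemma team_comp_restrict:
  assumes "S' \<subseteq> team_comp T f"
  shows "team_comp {t\<in>T. t \<circ> f \<in> S'} f = S'"
  using assms unfolding team_comp_def by blast

lemma team_comp_eq_Un_split:
  assumes "team_comp T f = S' \<union> U'"
  obtains S U where "T = S \<union> U" "team_comp S f = S'" "team_comp U f = U'"
proof
  show "team_comp {t\<in>T. t \<circ> f \<in> S'} f = S'" "team_comp {t\<in>T. t \<circ> f \<in> U'} f = U'"
    using team_comp_restrict[of _ T f] assms by simp_all
  have "t \<circ> f \<in> S' \<union> U'" if "t \<in> T" for t
    using that unfolding assms[symmetric] team_comp_def by (rule imageI)
  then show "T = {t\<in>T. t \<circ> f \<in> S'} \<union> {t\<in>T. t \<circ> f \<in> U'}" by blast
qed

text \<open>Invariance under compression T \<mapsto> T[f]; by the definition of stutter_equiv this is equivalent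
to the paper's stutter invariance.\<close>

definition stutter_invariant :: "'a ltl \<Rightarrow> bool" where
  "stutter_invariant \<phi> \<longleftrightarrow>
     (\<forall>T f. team_stuttering_fun f T \<longrightarrow> tsat (team_comp T f) \<phi> = tsat T \<phi>)"

lemma stutter_invariant_suffix:
  assumes "stutter_invariant \<phi>" and st: "team_stuttering_fun f T" and m: "f k \<le> m" "m < f (Suc k)"
  shows "tsat (team_suffix m T) \<phi> = tsat (team_suffix k (team_comp T f)) \<phi>"
proof -
  have "tsat (team_comp (team_suffix m T) (shift_stuttering f k m)) \<phi> = tsat (team_suffix m T) \<phi>"
    using assms(1) team_stuttering_fun_suffix(1)[OF st m] unfolding stutter_invariant_def by blast
  then show ?thesis
    using team_stuttering_fun_suffix(2)[OF st m] by simp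
qed

lemma until_transfer:
  assumes "stutter_invariant \<phi>" "stutter_invariant \<psi>" and st: "team_stuttering_fun f T"
  shows "(\<exists>m. (tsat (team_suffix m T) \<psi> = b) \<and> (\<forall>i<m. tsat (team_suffix i T) \<phi> = c)) \<longleftrightarrow>
    (\<exists>k. (tsat (team_suffix k (team_comp T f)) \<psi> = b) \<and>
         (\<forall>j<k. tsat (team_suffix j (team_comp T f)) \<phi> = c))"
proof (rule until_transfer_blocks[of f])
  show "strict_mono f" "f 0 = 0"
    using st unfolding team_stuttering_fun_def by simp_all
  fix k m assume "f k \<le> m" "m < f (Suc k)"
  then show "(tsat (team_suffix m T) \<phi> = c) = (tsat (team_suffix k (team_comp T f)) \<phi> = c) \<and>
      (tsat (team_suffix m T) \<psi> = b) = (tsat (team_suffix k (team_comp T f)) \<psi> = b)"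
    using stutter_invariant_suffix[OF assms(1) st] stutter_invariant_suffix[OF assms(2) st] by simp
qed

lemma stutter_invariant_Prop: "stutter_invariant (Prop p)"
  unfolding stutter_invariant_def team_stuttering_fun_def team_comp_def by simp

lemma stutter_invariant_Conj:
  "stutter_invariant \<phi> \<Longrightarrow> stutter_invariant \<psi> \<Longrightarrow> stutter_invariant (Conj \<phi> \<psi>)"
  unfolding stutter_invariant_def by simp

lemma stutter_invariant_Tilde: "stutter_invariant \<phi> \<Longrightarrow> stutter_invariant (Tilde \<phi>)"
  unfolding stutter_invariant_def by simp

lemma stutter_invariant_Neg:
  assumes "stutter_invariant \<phi>" shows "stutter_invariant (Neg \<phi>)"
  unfolding stutter_invariant_def
proof (intro allI impI)
  fix T :: "'a team" and f assume st: "team_stuttering_fun f T"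
  have "tsat {t \<circ> f} \<phi> = tsat {t} \<phi>" if "t \<in> T" for t
    using assms team_stuttering_fun_subset[OF st, of "{t}"] that
    unfolding stutter_invariant_def team_comp_def by fastforce
  then show "tsat (team_comp T f) (Neg \<phi>) = tsat T (Neg \<phi>)"
    by (simp add: team_comp_def)
qed

lemma stutter_invariant_Disj:
  assumes \<phi>: "stutter_invariant \<phi>" and \<psi>: "stutter_invariant \<psi>"
  shows "stutter_invariant (Disj \<phi> \<psi>)"
  unfolding stutter_invariant_def
proof (intro allI impI)
  fix T :: "'a team" and f assume st: "team_stuttering_fun f T"
  have sub: "tsat (team_comp S f) \<chi> = tsat S \<chi>" if "stutter_invariant \<chi>" "S \<subseteq> T" for S \<chi>
    using that team_stuttering_fun_subset[OF st] unfolding stutter_invariant_def by blast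
  show "tsat (team_comp T f) (Disj \<phi> \<psi>) = tsat T (Disj \<phi> \<psi>)"
  proof
    assume "tsat (team_comp T f) (Disj \<phi> \<psi>)"
    then obtain S' U' where SU': "team_comp T f = S' \<union> U'" "tsat S' \<phi>" "tsat U' \<psi>" by auto
    obtain S U where "T = S \<union> U" "team_comp S f = S'" "team_comp U f = U'"
      using team_comp_eq_Un_split[OF SU'(1)] .
    with SU' sub[OF \<phi>, of S] sub[OF \<psi>, of U] show "tsat T (Disj \<phi> \<psi>)" by auto
  next
    assume "tsat T (Disj \<phi> \<psi>)"
    then obtain S U where "T = S \<union> U" "tsat S \<phi>" "tsat U \<psi>" by auto
    with sub[OF \<phi>, of S] sub[OF \<psi>, of U] show "tsat (team_comp T f) (Disj \<phi> \<psi>)"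
      by (auto simp: team_comp_Un)
  qed
qed

text \<open>F and G are reduced to U by passing to the first position where the formula holds, resp.
fails; R is the dual of U.\<close>

lemma stutter_invariant_Fut:
  assumes "stutter_invariant \<phi>" shows "stutter_invariant (Fut \<phi>)"
  unfolding stutter_invariant_def
proof (intro allI impI)
  fix T :: "'a team" and f assume st: "team_stuttering_fun f T"
  have least: "tsat S (Fut \<phi>) \<longleftrightarrow> (\<exists>m. tsat (team_suffix m S) \<phi> = True \<and>
      (\<forall>i<m. tsat (team_suffix i S) \<phi> = False))" for S :: "'a team"
    using exists_least_iff[of "\<lambda>m. tsat (team_suffix m S) \<phi>"] by simp
  show "tsat (team_comp T f) (Fut \<phi>) = tsat T (Fut \<phi>)"
    unfolding least by (rule until_transfer[OF assms assms st, symmetric])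
qed

lemma stutter_invariant_Glob:
  assumes "stutter_invariant \<phi>" shows "stutter_invariant (Glob \<phi>)"
  unfolding stutter_invariant_def
proof (intro allI impI)
  fix T :: "'a team" and f assume st: "team_stuttering_fun f T"
  have least: "tsat S (Glob \<phi>) \<longleftrightarrow> \<not> (\<exists>m. tsat (team_suffix m S) \<phi> = False \<and>
      (\<forall>i<m. tsat (team_suffix i S) \<phi> = True))" for S :: "'a team"
    using exists_least_iff[of "\<lambda>m. \<not> tsat (team_suffix m S) \<phi>"] by auto
  show "tsat (team_comp T f) (Glob \<phi>) = tsat T (Glob \<phi>)"
    unfolding least using until_transfer[OF assms assms st] by (rule arg_cong[symmetric])
qed

lemma stutter_invariant_Until:
  assumes "stutter_invariant \<phi>" "stutter_invariant \<psi>"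
  shows "stutter_invariant (Until \<phi> \<psi>)"
  using until_transfer[OF assms, where b = True and c = True]
  unfolding stutter_invariant_def by simp

lemma stutter_invariant_Release:
  assumes "stutter_invariant \<phi>" "stutter_invariant \<psi>"
  shows "stutter_invariant (Release \<phi> \<psi>)"
  unfolding stutter_invariant_def
proof (intro allI impI)
  fix T :: "'a team" and f assume st: "team_stuttering_fun f T"
  have dual: "tsat S (Release \<phi> \<psi>) \<longleftrightarrow> \<not> (\<exists>m. tsat (team_suffix m S) \<psi> = False \<and>
      (\<forall>i<m. tsat (team_suffix i S) \<phi> = False))" for S :: "'a team"
    by auto
  show "tsat (team_comp T f) (Release \<phi> \<psi>) = tsat T (Release \<phi> \<psi>)"
    unfolding dual using until_transfer[OF assms st] by (rule arg_cong[symmetric])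
qed

lemma stutter_invariant_noX: "noX \<phi> \<Longrightarrow> stutter_invariant \<phi>"
  by (induction \<phi>)
    (simp_all add: stutter_invariant_Prop stutter_invariant_Neg stutter_invariant_Conj
      stutter_invariant_Disj stutter_invariant_Fut stutter_invariant_Glob stutter_invariant_Until
      stutter_invariant_Release stutter_invariant_Tilde)

theorem mainTheorem9:
  fixes \<phi> :: "'a ltl" and T T' :: "'a team"
  assumes "countable (UNIV :: 'a set)" and "infinite (UNIV :: 'a set)"
    and "noX \<phi>"
    and "stutter_equiv T T'"
  shows "tsat T \<phi> \<longleftrightarrow> tsat T' \<phi>"
proof -
  obtain f f' where "team_stuttering_fun f T" "team_stuttering_fun f' T'"
    and "team_comp T f = team_comp T' f'"
    using assms(4) unfolding stutter_equiv_def by blast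
  with stutter_invariant_noX[OF assms(3)] show ?thesis
    unfolding stutter_invariant_def by metis
qed

end
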